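(* Let $k\geq 2$ and $n\geq k$ be integers. In the quasi-shuffle algebra $(\mathcal{H},\ast)$, $$ \sum_{\substack{ r, s_i\geq 1 \\ r+s_1+\cdots +s_{k-1}=n}} z_{r}\ast z_{s_1,\dots, s_{k-1}} = k \sum_{\substack{t_i\geq 1 \\ t_1+\cdots+t_{k}=n}} z_{t_1,\dots, t_{k}} + (n-k+1) \sum_{\substack{u_i\geq 1 \\ u_1+\cdots+u_{k-1}=n }} z_{u_1,\dots, u_{k-1}}. $$
   Context: Let $\mathcal{H}$ be the free $\mathbb{Z}$-module on the free monoid generated by letters $z_s$ ($s\geq 1$ an integer); write $z_{s_1,\dots,s_k}:=z_{s_1}z_{s_2}\cdots z_{s_k}$ for a word and $1$ for the empty word. The quasi-shuffle (stuffle) product $\ast$ is the $\mathbb{Z}$-bilinear product on $\mathcal{H}$ defined on words recursively by $1\ast u=u\ast 1=u$ and $(z_{r}u)\ast(z_{s}v)=z_{r}\,(u\ast (z_{s}v))+z_{s}\,((z_{r}u)\ast v)+z_{r+s}\,(u\ast v)$ for words $u,v$ and integers $r,s\geq 1$ (juxtaposition denotes concatenation, extended linearly). *)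

theory Defs
  imports Main "HOL-Library.Poly_Mapping"
begin

text \<open>The free Z-module H on words in letters z_s (s >= 1): a word z_{s1,...,sk} is the
list [s1,...,sk] of positive naturals; elements of H are finitely supported functions
from words to integers.\<close>

type_synonym qsh = "nat list \<Rightarrow>\<^sub>0 int"

definition word :: "nat list \<Rightarrow> qsh" where
  "word w = Poly_Mapping.single w 1"

definition lcons :: "nat \<Rightarrow> qsh \<Rightarrow> qsh" where
  "lcons a p = (\<Sum>w\<in>Poly_Mapping.keys p. Poly_Mapping.single (a # w) (Poly_Mapping.lookup p w))"

fun stuffle_w :: "nat list \<Rightarrow> nat list \<Rightarrow> qsh" where
  "stuffle_w [] v = word v"
| "stuffle_w u [] = word u"
| "stuffle_w (r # u) (s # v) =
     lcons r (stuffle_w u (s # v)) + lcons s (stuffle_w (r # u) v) + lcons (r + s) (stuffle_w u v)"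

definition stuffle :: "qsh \<Rightarrow> qsh \<Rightarrow> qsh" (infixl "\<star>" 70) where
  "p \<star> q = (\<Sum>u\<in>Poly_Mapping.keys p. \<Sum>v\<in>Poly_Mapping.keys q.
      Poly_Mapping.map (\<lambda>x. Poly_Mapping.lookup p u * Poly_Mapping.lookup q v * x) (stuffle_w u v))"

definition smul :: "int \<Rightarrow> qsh \<Rightarrow> qsh" where
  "smul c p = Poly_Mapping.map (\<lambda>x. c * x) p"

definition compositions :: "nat \<Rightarrow> nat \<Rightarrow> nat list set" where
  "compositions m n = {ts. length ts = m \<and> (\<forall>t\<in>set ts. 1 \<le> t) \<and> sum_list ts = n}"

end

theory Submission imports Defs begin

text \<open>Write C(m, n) (composition_sum) for the sum of all words of m positive letters of
weight n and A(m, n) (letter_stuffle_sum) for the sum of all stuffles z_r * z_ss with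
r + |ss| = n and ss of length m.
Expanding z_r * z_{s v} by the stuffle recursion splits A(m+1, n) into three parts:
the words z_r z_s v, which give C(m+2, n); the words z_s (z_r * v), which give
the sum of z_s A(m, n-s); and the words z_{r+s} v, in which every letter t arises
from t - 1 splittings t = r + s.  Induction on m then yields
A(m, n) = (m+1) C(m+1, n) + (n-m) C(m, n), which is the theorem for m = k - 1.\<close>

lemma lookup_word: "Poly_Mapping.lookup (word v) w = (if v = w then 1 else 0)"
  by (simp add: word_def lookup_single when_def)

lemma lookup_lcons:
  "Poly_Mapping.lookup (lcons a p) w =
     (case w of [] \<Rightarrow> 0 | b # v \<Rightarrow> if b = a then Poly_Mapping.lookup p v else 0)"
proof -
  have "Poly_Mapping.lookup (lcons a p) w =
          (\<Sum>v\<in>Poly_Mapping.keys p. if w = a # v then Poly_Mapping.lookup p v else 0)"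
    by (simp add: lcons_def lookup_sum lookup_single when_def eq_commute)
  then show ?thesis
    by (auto simp: in_keys_iff split: list.split)
qed

lemma lcons_add: "lcons a (p + q) = lcons a p + lcons a q"
  by (rule poly_mapping_eqI) (simp add: lookup_lcons lookup_add split: list.split)

lemma lcons_zero: "lcons a 0 = 0"
  by (rule poly_mapping_eqI) (simp add: lookup_lcons split: list.split)

lemma lcons_sum: "lcons a (\<Sum>x\<in>A. f x) = (\<Sum>x\<in>A. lcons a (f x))"
  by (induction A rule: infinite_finite_induct) (auto simp: lcons_zero lcons_add)

lemma lcons_word: "lcons a (word v) = word (a # v)"
  by (rule poly_mapping_eqI) (auto simp: lookup_lcons lookup_word split: list.split)

lemma lookup_smul: "Poly_Mapping.lookup (smul c p) w = c * Poly_Mapping.lookup p w"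
  by (simp add: smul_def map.rep_eq when_def)

lemma smul_add_left: "smul (c + d) p = smul c p + smul d p"
  by (rule poly_mapping_eqI) (simp add: lookup_smul lookup_add algebra_simps)

lemma smul_add_one: "smul (c + 1) p = smul c p + p"
  by (rule poly_mapping_eqI) (simp add: lookup_smul lookup_add algebra_simps)

lemma smul_one: "smul 1 p = p"
  by (rule poly_mapping_eqI) (simp add: lookup_smul)

lemma smul_zero_right: "smul c 0 = 0"
  by (rule poly_mapping_eqI) (simp add: lookup_smul)

lemma smul_zero_left: "smul 0 p = 0"
  by (rule poly_mapping_eqI) (simp add: lookup_smul)

lemma smul_sum: "smul c (\<Sum>x\<in>A. f x) = (\<Sum>x\<in>A. smul c (f x))"
  by (rule poly_mapping_eqI) (simp add: lookup_smul lookup_sum sum_distrib_left)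

lemma smul_lcons: "smul c (lcons a p) = lcons a (smul c p)"
  by (rule poly_mapping_eqI) (simp add: lookup_smul lookup_lcons split: list.split)

lemma sum_const_eq_smul_card: "(\<Sum>x\<in>A. p) = smul (int (card A)) p"
  by (rule poly_mapping_eqI) (simp add: lookup_smul lookup_sum)

lemma stuffle_word_word: "word u \<star> word v = stuffle_w u v"
  by (rule poly_mapping_eqI) (simp add: stuffle_def word_def map.rep_eq when_def)

lemma stuffle_w_singleton_Cons:
  "stuffle_w [r] (s # v) = word (r # s # v) + lcons s (stuffle_w [r] v) + word ((r + s) # v)"
  by (simp add: lcons_word)

lemma finite_compositions: "finite (compositions m n)"
proof -
  have "compositions m n \<subseteq> {xs. set xs \<subseteq> {0..n} \<and> length xs = m}"
    unfolding compositions_def using member_le_sum_list by fastforce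
  moreover have "finite {xs. set xs \<subseteq> {0..n} \<and> length xs = m}"
    by (rule finite_lists_length_eq) simp
  ultimately show ?thesis
    by (rule finite_subset)
qed

lemma compositions_0: "compositions 0 n = (if n = 0 then {[]} else {})"
  by (auto simp: compositions_def)

lemma compositions_Suc:
  "compositions (Suc m) n = (\<lambda>(s, v). s # v) ` Sigma {1..n} (\<lambda>s. compositions m (n - s))"
proof (rule set_eqI, rule iffI)
  fix ts
  assume "ts \<in> compositions (Suc m) n"
  then obtain s v where "ts = s # v" "1 \<le> s" "s + sum_list v = n" "v \<in> compositions m (n - s)"
    by (cases ts) (auto simp: compositions_def)
  then show "ts \<in> (\<lambda>(s, v). s # v) ` Sigma {1..n} (\<lambda>s. compositions m (n - s))"
    by (auto intro!: image_eqI[where x = "(s, v)"])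
qed (auto simp: compositions_def)

lemma sum_compositions_Suc:
  "(\<Sum>ts\<in>compositions (Suc m) n. f ts) = (\<Sum>s\<in>{1..n}. \<Sum>v\<in>compositions m (n - s). f (s # v))"
proof -
  have "inj_on (\<lambda>(s, v). s # v) (Sigma {1..n} (\<lambda>s. compositions m (n - s)))"
    by (auto simp: inj_on_def)
  then show ?thesis
    unfolding compositions_Suc
    by (simp add: sum.reindex sum.Sigma finite_compositions split_def)
qed

lemma sum_triangle_swap:
  fixes F :: "nat \<Rightarrow> nat \<Rightarrow> 'a::comm_monoid_add"
  shows "(\<Sum>r\<in>{1..n}. \<Sum>s\<in>{1..n - r}. F r s) = (\<Sum>s\<in>{1..n}. \<Sum>r\<in>{1..n - s}. F r s)"
proof -
  have "(\<Sum>r\<in>{1..n}. \<Sum>s\<in>{1..n - r}. F r s) = (\<Sum>r\<in>{1..n}. \<Sum>s\<in>{s\<in>{1..n}. r + s \<le> n}. F r s)"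
    by (intro sum.cong) auto
  also have "\<dots> = (\<Sum>s\<in>{1..n}. \<Sum>r\<in>{r\<in>{1..n}. r + s \<le> n}. F r s)"
    by (rule sum.swap_restrict) auto
  also have "\<dots> = (\<Sum>s\<in>{1..n}. \<Sum>r\<in>{1..n - s}. F r s)"
    by (intro sum.cong) auto
  finally show ?thesis .
qed

lemma sum_triangle_diagonal:
  fixes g :: "nat \<Rightarrow> 'a::comm_monoid_add"
  shows "(\<Sum>r\<in>{1..n}. \<Sum>s\<in>{1..n - r}. g (r + s)) = (\<Sum>t\<in>{1..n}. \<Sum>r\<in>{1..<t}. g t)"
proof -
  have "(\<Sum>s\<in>{1..n - r}. g (r + s)) = (\<Sum>t\<in>{t\<in>{1..n}. r < t}. g t)" for r
  proof -
    have "(\<lambda>s. r + s) ` {1..n - r} = {t\<in>{1..n}. r < t}"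
      by (auto simp: image_iff intro!: bexI[where x = "t - r" for t])
    then show ?thesis
      by (metis (no_types) add_left_imp_eq inj_onI sum.reindex_cong)
  qed
  then have "(\<Sum>r\<in>{1..n}. \<Sum>s\<in>{1..n - r}. g (r + s)) = (\<Sum>r\<in>{1..n}. \<Sum>t\<in>{t\<in>{1..n}. r < t}. g t)"
    by simp
  also have "\<dots> = (\<Sum>t\<in>{1..n}. \<Sum>r\<in>{r\<in>{1..n}. r < t}. g t)"
    by (rule sum.swap_restrict) auto
  also have "\<dots> = (\<Sum>t\<in>{1..n}. \<Sum>r\<in>{1..<t}. g t)"
    by (intro sum.cong) auto
  finally show ?thesis .
qed

definition composition_sum :: "nat \<Rightarrow> nat \<Rightarrow> qsh" where
  "composition_sum m n = (\<Sum>ts\<in>compositions m n. word ts)"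

definition letter_stuffle_sum :: "nat \<Rightarrow> nat \<Rightarrow> qsh" where
  "letter_stuffle_sum m n = (\<Sum>r\<in>{1..n}. \<Sum>ss\<in>compositions m (n - r). stuffle_w [r] ss)"

lemma composition_sum_0: "composition_sum 0 n = (if n = 0 then word [] else 0)"
  by (simp add: composition_sum_def compositions_0)

lemma composition_sum_Suc:
  "composition_sum (Suc m) n = (\<Sum>s\<in>{1..n}. lcons s (composition_sum m (n - s)))"
  unfolding composition_sum_def sum_compositions_Suc by (simp add: lcons_sum lcons_word)

lemma letter_stuffle_sum_0: "letter_stuffle_sum 0 n = composition_sum (Suc 0) n"
proof -
  have "letter_stuffle_sum 0 n = (\<Sum>r\<in>{1..n}. if r = n then word [r] else 0)"
    unfolding letter_stuffle_sum_def by (intro sum.cong) (auto simp: compositions_0)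
  also have "\<dots> = composition_sum (Suc 0) n"
    unfolding composition_sum_Suc
    by (intro sum.cong) (auto simp: composition_sum_0 lcons_word lcons_zero)
  finally show ?thesis .
qed

lemma letter_stuffle_sum_Suc:
  "letter_stuffle_sum (Suc m) n =
     composition_sum (Suc (Suc m)) n
     + (\<Sum>s\<in>{1..n}. lcons s (letter_stuffle_sum m (n - s)))
     + (\<Sum>t\<in>{1..n}. smul (int t - 1) (lcons t (composition_sum m (n - t))))"
proof -
  define D where "D t = lcons t (composition_sum m (n - t))" for t
  have "letter_stuffle_sum (Suc m) n =
          (\<Sum>r\<in>{1..n}. \<Sum>s\<in>{1..n - r}.
             lcons r (lcons s (composition_sum m (n - r - s)))
             + lcons s (\<Sum>v\<in>compositions m (n - s - r). stuffle_w [r] v)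
             + D (r + s))"
    unfolding letter_stuffle_sum_def sum_compositions_Suc stuffle_w_singleton_Cons D_def
    by (simp add: sum.distrib composition_sum_def lcons_sum lcons_word diff_diff_left add.commute)
  also have "\<dots> = (\<Sum>r\<in>{1..n}. lcons r (composition_sum (Suc m) (n - r)))
       + (\<Sum>r\<in>{1..n}. \<Sum>s\<in>{1..n - r}. lcons s (\<Sum>v\<in>compositions m (n - s - r). stuffle_w [r] v))
       + (\<Sum>r\<in>{1..n}. \<Sum>s\<in>{1..n - r}. D (r + s))"
    by (simp add: sum.distrib composition_sum_Suc lcons_sum)
  also have "(\<Sum>r\<in>{1..n}. \<Sum>s\<in>{1..n - r}. lcons s (\<Sum>v\<in>compositions m (n - s - r). stuffle_w [r] v))
      = (\<Sum>s\<in>{1..n}. lcons s (letter_stuffle_sum m (n - s)))"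
    unfolding letter_stuffle_sum_def
    by (subst sum_triangle_swap) (simp add: lcons_sum diff_diff_left)
  also have "(\<Sum>r\<in>{1..n}. \<Sum>s\<in>{1..n - r}. D (r + s)) = (\<Sum>t\<in>{1..n}. smul (int t - 1) (D t))"
    unfolding sum_triangle_diagonal
    by (intro sum.cong) (simp_all add: sum_const_eq_smul_card of_nat_diff)
  finally show ?thesis
    by (simp add: composition_sum_Suc[of "Suc m"] D_def)
qed

lemma letter_stuffle_sum_eq:
  "letter_stuffle_sum m n =
     smul (int m + 1) (composition_sum (Suc m) n) + smul (int n - int m) (composition_sum m n)"
proof (induction m arbitrary: n)
  case 0
  show ?case
    by (simp add: letter_stuffle_sum_0 composition_sum_0 smul_one smul_zero_left smul_zero_right)
next
  case (Suc m)
  define D where "D t = lcons t (composition_sum m (n - t))" for t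
  have "(\<Sum>s\<in>{1..n}. lcons s (letter_stuffle_sum m (n - s)))
      = smul (int m + 1) (composition_sum (Suc (Suc m)) n)
        + (\<Sum>s\<in>{1..n}. smul (int (n - s) - int m) (D s))"
    unfolding Suc.IH
    by (simp add: lcons_add sum.distrib composition_sum_Suc[of "Suc m"] smul_sum smul_lcons D_def)
  moreover have "(\<Sum>s\<in>{1..n}. smul (int (n - s) - int m) (D s)) + (\<Sum>t\<in>{1..n}. smul (int t - 1) (D t))
      = smul (int n - int (Suc m)) (composition_sum (Suc m) n)"
    unfolding composition_sum_Suc smul_sum sum.distrib[symmetric] D_def
    by (intro sum.cong refl) (simp add: smul_add_left[symmetric] of_nat_diff algebra_simps)
  moreover have "smul (int (Suc m) + 1) (composition_sum (Suc (Suc m)) n)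
      = composition_sum (Suc (Suc m)) n + smul (int m + 1) (composition_sum (Suc (Suc m)) n)"
    using smul_add_one[of "int m + 1"] by (simp add: add.commute)
  ultimately show ?case
    unfolding letter_stuffle_sum_Suc D_def by (simp add: add.assoc)
qed

theorem theorem2p3:
  fixes k n :: nat
  assumes "2 \<le> k" and "k \<le> n"
  shows "(\<Sum>(r, ss) \<in> {(r, ss). 1 \<le> r \<and> length ss = k - 1 \<and> (\<forall>s\<in>set ss. 1 \<le> s)
                           \<and> r + sum_list ss = n}.
            word [r] \<star> word ss)
       = smul (int k) (\<Sum>ts\<in>compositions k n. word ts)
         + smul (int (n - k + 1)) (\<Sum>us\<in>compositions (k - 1) n. word us)"
proof -
  have "{(r, ss). 1 \<le> r \<and> length ss = k - 1 \<and> (\<forall>s\<in>set ss. 1 \<le> s) \<and> r + sum_list ss = n}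
      = Sigma {1..n} (\<lambda>r. compositions (k - 1) (n - r))"
    by (auto simp: compositions_def)
  then have "(\<Sum>(r, ss) \<in> {(r, ss). 1 \<le> r \<and> length ss = k - 1 \<and> (\<forall>s\<in>set ss. 1 \<le> s)
                           \<and> r + sum_list ss = n}. word [r] \<star> word ss) = letter_stuffle_sum (k - 1) n"
    by (simp add: letter_stuffle_sum_def sum.Sigma finite_compositions stuffle_word_word)
  also have "\<dots> = smul (int k) (composition_sum k n) + smul (int (n - k + 1)) (composition_sum (k - 1) n)"
  proof -
    have "int (k - 1) + 1 = int k" "int n - int (k - 1) = int (n - k + 1)" "Suc (k - 1) = k"
      using assms by (simp_all add: of_nat_diff)
    then show ?thesis
      using letter_stuffle_sum_eq[of "k - 1" n] by (simp only:)
  qed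
  finally show ?thesis
    by (simp add: composition_sum_def)
qed

end
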